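(* Let $\Delta=\prod_{1\le i<j\le n}(x_i-x_j)$ and for $n-1\ge m_1>\dots>m_k\ge1$ let $\omega_{m_1,\dots,m_k}=d_{m_1}\cdots d_{m_k}\Delta$. Then the set \[ \{\omega_{m_1,\dots,m_k}\mid n-1\ge m_1>\dots>m_k\ge1,\ k=1,\dots,n-1\}\cup\{\Delta\} \] is linearly independent in $\mathbb{R}[x_1,\dots,x_n]\otimes\wedge\mathbb{R}^n$.
   Context: With $\partial_i=\partial/\partial x_i$, $d_j(h\,dx_{i_1}\wedge\cdots\wedge dx_{i_k})=\sum_{l=1}^n(\partial_l^jh)\,dx_l\wedge dx_{i_1}\wedge\cdots\wedge dx_{i_k}$, extended linearly. *)

theory Defs
  imports "HOL-Analysis.Analysis"
begin

text \<open>Polynomials in x_1..x_n are represented by their (real) polynomial functions on points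
  p :: nat \<Rightarrow> real, variable x_{i+1} being the coordinate p i (0-based, i < n).
  A differential form in R[x_1..x_n] \<otimes> \<wedge>R^n is represented by its coefficient family:
  for each finite set J \<subseteq> {0..<n} (the increasing multi-index) the coefficient of dx_J.\<close>

type_synonym pfun = "(nat \<Rightarrow> real) \<Rightarrow> real"
type_synonym form = "nat set \<Rightarrow> pfun"

definition partial :: "nat \<Rightarrow> pfun \<Rightarrow> pfun" where
  "partial l f = (\<lambda>p. deriv (\<lambda>t. f (p(l := t))) (p l))"

text \<open>Sign of dx_l \<and> dx_I = sign * dx_{I \<union> {l}} (l \<notin> I).\<close>
definition wedge_sign :: "nat \<Rightarrow> nat set \<Rightarrow> real" where
  "wedge_sign l I = (-1) ^ card {i \<in> I. i < l}"

text \<open>d_j(h dx_I) = \<Sum>_l (\<partial>_l^j h) dx_l \<and> dx_I, extended linearly; coefficient of dx_J.\<close>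
definition dj :: "nat \<Rightarrow> nat \<Rightarrow> form \<Rightarrow> form" where
  "dj n j \<omega> J = (if J \<subseteq> {..<n}
      then (\<lambda>p. \<Sum>l\<in>J. wedge_sign l (J - {l}) * ((partial l ^^ j) (\<omega> (J - {l}))) p)
      else (\<lambda>p. 0))"

definition Delta :: "nat \<Rightarrow> form" where
  "Delta n J = (if J = {} then (\<lambda>p. \<Prod>(i,j)\<in>{(i,j). i < j \<and> j < n}. p i - p j) else (\<lambda>p. 0))"

fun omega :: "nat \<Rightarrow> nat list \<Rightarrow> form" where
  "omega n [] = Delta n"
| "omega n (m # ms) = dj n m (omega n ms)"

definition index_seqs :: "nat \<Rightarrow> nat list set" where
  "index_seqs n = {ms. sorted_wrt (>) ms \<and> set ms \<subseteq> {1..n-1}}"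

definition lin_indep_family :: "'i set \<Rightarrow> ('i \<Rightarrow> form) \<Rightarrow> bool" where
  "lin_indep_family S f \<longleftrightarrow>
     (\<forall>c. (\<forall>J p. (\<Sum>s\<in>S. c s * f s J p) = 0) \<longrightarrow> (\<forall>s\<in>S. c s = 0))"

end

theory Submission
  imports Defs
begin

text \<open>Take the coefficient of
  \<open>dx\<^sub>J\<close> for \<open>J = set m\<close> and evaluate its mixed partial derivative \<open>\<partial>\<^sup>e\<close> at the origin,
  where \<open>e l = 0\<close> for \<open>l \<in> J\<close> and \<open>e l = l\<close> otherwise. Each \<open>d\<^sub>j\<close> differentiates \<open>j\<close> times in
  one variable of the current index set, so \<open>\<omega>\<^sub>s\<close> contributes a signed sum of values
  \<open>\<partial>\<^sup>e\<^sup>'\<Delta>(0)\<close>, where \<open>e'\<close> arises from \<open>e\<close> by distributing the entries of \<open>s\<close> over \<open>J\<close>.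
  As \<open>\<Delta>\<close> is alternating, \<open>\<partial>\<^sup>e\<^sup>'\<Delta>(0) = 0\<close> as soon as two exponents agree. Sequences \<open>s\<close> of another
  length have no \<open>dx\<^sub>J\<close>-component; for \<open>s \<noteq> m\<close> of the same length some entry \<open>v\<close> of \<open>s\<close> lies outside \<open>J\<close>, and the exponent \<open>v\<close> placed
  in \<open>J\<close> collides with \<open>e v = v\<close>. For \<open>s = m\<close> all terms agree and give, up to sign,
  \<open>k! \<partial>\<^sub>1 \<partial>\<^sub>2\<^sup>2 \<dots> \<partial>\<^sub>n\<^sub>-\<^sub>1\<^sup>n\<^sup>-\<^sup>1 \<Delta>(0) = \<plusminus>k! \<Prod>\<^sub>i\<^sub><\<^sub>n i! \<noteq> 0\<close>
  where \<open>k = length m\<close> and variables are indexed from 0.\<close>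

inductive_set poly_fun :: "pfun set" where
  const: "(\<lambda>p. c) \<in> poly_fun"
| coord: "(\<lambda>p. p i) \<in> poly_fun"
| add: "f \<in> poly_fun \<Longrightarrow> g \<in> poly_fun \<Longrightarrow> (\<lambda>p. f p + g p) \<in> poly_fun"
| mult: "f \<in> poly_fun \<Longrightarrow> g \<in> poly_fun \<Longrightarrow> (\<lambda>p. f p * g p) \<in> poly_fun"

declare poly_fun.intros [simp, intro]

lemma poly_fun_scale [simp, intro]: "f \<in> poly_fun \<Longrightarrow> (\<lambda>p. c * f p) \<in> poly_fun"
  using poly_fun.mult[OF poly_fun.const] .

lemma poly_fun_diff [simp, intro]: "f \<in> poly_fun \<Longrightarrow> g \<in> poly_fun \<Longrightarrow> (\<lambda>p. f p - g p) \<in> poly_fun"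
  using poly_fun.add[OF _ poly_fun_scale[of g "-1"]] by simp

lemma poly_fun_sum [simp, intro]: "(\<And>a. a \<in> A \<Longrightarrow> h a \<in> poly_fun) \<Longrightarrow> (\<lambda>p. \<Sum>a\<in>A. h a p) \<in> poly_fun"
  by (induction A rule: infinite_finite_induct) auto

lemma poly_fun_prod [simp, intro]: "(\<And>a. a \<in> A \<Longrightarrow> h a \<in> poly_fun) \<Longrightarrow> (\<lambda>p. \<Prod>a\<in>A. h a p) \<in> poly_fun"
  by (induction A rule: infinite_finite_induct) auto

lemma poly_fun_reindex: "f \<in> poly_fun \<Longrightarrow> (\<lambda>p. f (\<lambda>i. p (\<sigma> i))) \<in> poly_fun"
  by (induction rule: poly_fun.induct) auto

lemma poly_fun_differentiable_in_coord:
  "f \<in> poly_fun \<Longrightarrow> (\<lambda>t. f (p(l := t))) differentiable at x"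
proof (induction rule: poly_fun.induct)
  case (coord i)
  then show ?case by (cases "i = l") simp_all
qed simp_all

lemma has_partial_poly_fun:
  "f \<in> poly_fun \<Longrightarrow> ((\<lambda>t. f (p(l := t))) has_real_derivative partial l f p) (at (p l))"
  unfolding partial_def DERIV_deriv_iff_real_differentiable
  by (rule poly_fun_differentiable_in_coord)

lemma partial_const [simp]: "partial l (\<lambda>p. c) = (\<lambda>p. 0)"
  by (simp add: partial_def)

lemma partial_coord: "partial l (\<lambda>p. p i) = (\<lambda>p. if i = l then 1 else 0)"
  by (cases "i = l") (simp_all add: partial_def)

lemma partial_add:
  assumes "f \<in> poly_fun" "g \<in> poly_fun"
  shows "partial l (\<lambda>p. f p + g p) = (\<lambda>p. partial l f p + partial l g p)"
proof
  fix p
  have "((\<lambda>t. f (p(l := t)) + g (p(l := t))) has_real_derivative partial l f p + partial l g p) (at (p l))"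
    using assms by (intro DERIV_add has_partial_poly_fun)
  then show "partial l (\<lambda>p. f p + g p) p = partial l f p + partial l g p"
    unfolding partial_def[of l "\<lambda>p. f p + g p"] by (rule DERIV_imp_deriv)
qed

lemma partial_mult:
  assumes "f \<in> poly_fun" "g \<in> poly_fun"
  shows "partial l (\<lambda>p. f p * g p) = (\<lambda>p. partial l f p * g p + f p * partial l g p)"
proof
  fix p
  have "((\<lambda>t. f (p(l := t)) * g (p(l := t))) has_real_derivative partial l f p * g p + f p * partial l g p) (at (p l))"
    using DERIV_mult[OF has_partial_poly_fun[OF assms(1), of p l] has_partial_poly_fun[OF assms(2), of p l]]
    by (simp add: algebra_simps)
  then show "partial l (\<lambda>p. f p * g p) p = partial l f p * g p + f p * partial l g p"
    unfolding partial_def[of l "\<lambda>p. f p * g p"] by (rule DERIV_imp_deriv)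
qed

lemma poly_fun_partial [simp, intro]: "f \<in> poly_fun \<Longrightarrow> partial l f \<in> poly_fun"
  by (induction rule: poly_fun.induct) (auto simp: partial_coord partial_add partial_mult)

lemma poly_fun_funpow_partial [simp, intro]: "f \<in> poly_fun \<Longrightarrow> (partial l ^^ k) f \<in> poly_fun"
  by (induction k) auto

lemma partial_scale: "f \<in> poly_fun \<Longrightarrow> partial l (\<lambda>p. c * f p) = (\<lambda>p. c * partial l f p)"
  using partial_mult[OF poly_fun.const] by simp

lemma partial_diff:
  "f \<in> poly_fun \<Longrightarrow> g \<in> poly_fun \<Longrightarrow> partial l (\<lambda>p. f p - g p) = (\<lambda>p. partial l f p - partial l g p)"
  using partial_add[OF _ poly_fun_scale[of g "-1"]] partial_scale[of g l "-1"] by simp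

lemma partial_sum:
  "(\<And>a. a \<in> A \<Longrightarrow> h a \<in> poly_fun) \<Longrightarrow> partial l (\<lambda>p. \<Sum>a\<in>A. h a p) = (\<lambda>p. \<Sum>a\<in>A. partial l (h a) p)"
  by (induction A rule: infinite_finite_induct) (auto simp: partial_add)

lemma funpow_partial_linear:
  "(\<And>a. a \<in> A \<Longrightarrow> h a \<in> poly_fun) \<Longrightarrow>
   (partial l ^^ k) (\<lambda>p. \<Sum>a\<in>A. c a * h a p) = (\<lambda>p. \<Sum>a\<in>A. c a * (partial l ^^ k) (h a) p)"
  by (induction k) (auto simp: partial_sum partial_scale)

lemma funpow_partial_zero [simp]: "(partial l ^^ k) (\<lambda>p. 0) = (\<lambda>p. 0)"
  by (induction k) auto

lemma partial_commute: "f \<in> poly_fun \<Longrightarrow> partial i (partial j f) = partial j (partial i f)"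
  by (induction rule: poly_fun.induct)
    (simp_all add: partial_coord partial_add partial_mult algebra_simps)

lemma funpow_partial_commute:
  "f \<in> poly_fun \<Longrightarrow> (partial i ^^ a) ((partial j ^^ b) f) = (partial j ^^ b) ((partial i ^^ a) f)"
proof -
  have commute_once: "partial i ((partial j ^^ b) f) = (partial j ^^ b) (partial i f)" if "f \<in> poly_fun" for f
    using that by (induction b) (simp_all add: partial_commute[of "(partial j ^^ _) f" i j])
  show "f \<in> poly_fun \<Longrightarrow> ?thesis"
    by (induction a) (auto simp: commute_once)
qed

lemma partial_comp_transpose:
  "partial l (\<lambda>p. f (\<lambda>i. p (Transposition.transpose a b i)))
   = (\<lambda>p. partial (Transposition.transpose a b l) f (\<lambda>i. p (Transposition.transpose a b i)))"
proof
  fix p :: "nat \<Rightarrow> real"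
  have "(\<lambda>i. (p(l := t)) (Transposition.transpose a b i))
      = (\<lambda>i. p (Transposition.transpose a b i))(Transposition.transpose a b l := t)" for t
    by (rule ext) (metis fun_upd_apply transpose_involutory)
  then show "partial l (\<lambda>p. f (\<lambda>i. p (Transposition.transpose a b i))) p
      = partial (Transposition.transpose a b l) f (\<lambda>i. p (Transposition.transpose a b i))"
    unfolding partial_def by (simp only: transpose_involutory)
qed

lemma funpow_partial_comp_transpose:
  "(partial l ^^ k) (\<lambda>p. f (\<lambda>i. p (Transposition.transpose a b i)))
   = (\<lambda>p. (partial (Transposition.transpose a b l) ^^ k) f (\<lambda>i. p (Transposition.transpose a b i)))"
  by (induction k) (simp_all only: funpow.simps comp_apply id_apply partial_comp_transpose)

fun multi_partial :: "(nat \<Rightarrow> nat) \<Rightarrow> nat \<Rightarrow> pfun \<Rightarrow> pfun" where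
  "multi_partial e 0 f = f"
| "multi_partial e (Suc k) f = multi_partial e k ((partial k ^^ e k) f)"

lemma poly_fun_multi_partial [simp, intro]: "f \<in> poly_fun \<Longrightarrow> multi_partial e n f \<in> poly_fun"
  by (induction n arbitrary: f) auto

lemma multi_partial_cong: "(\<And>i. i < n \<Longrightarrow> e i = e' i) \<Longrightarrow> multi_partial e n f = multi_partial e' n f"
  by (induction n arbitrary: f) auto

lemma multi_partial_linear:
  "(\<And>a. a \<in> A \<Longrightarrow> h a \<in> poly_fun) \<Longrightarrow>
   multi_partial e n (\<lambda>p. \<Sum>a\<in>A. c a * h a p) = (\<lambda>p. \<Sum>a\<in>A. c a * multi_partial e n (h a) p)"
  by (induction n arbitrary: h) (simp_all add: funpow_partial_linear)

lemma multi_partial_zero [simp]: "multi_partial e n (\<lambda>p. 0) = (\<lambda>p. 0)"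
  by (induction n) simp_all

lemma multi_partial_scale: "f \<in> poly_fun \<Longrightarrow> multi_partial e n (\<lambda>p. c * f p) = (\<lambda>p. c * multi_partial e n f p)"
  using multi_partial_linear[of "{()}" "\<lambda>_. f"] by simp

lemma multi_partial_funpow_partial:
  assumes "l < n" "f \<in> poly_fun"
  shows "multi_partial e n ((partial l ^^ k) f) = multi_partial (e(l := e l + k)) n f"
  using assms
proof (induction n arbitrary: f e)
  case (Suc n)
  show ?case
  proof (cases "l = n")
    case True
    have "multi_partial e n ((partial n ^^ e n) ((partial n ^^ k) f))
        = multi_partial (e(n := e n + k)) n ((partial n ^^ (e n + k)) f)"
      by (simp add: funpow_add) (rule multi_partial_cong; simp)
    with True show ?thesis by (simp only: multi_partial.simps fun_upd_same)
  next
    case False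
    with Suc show ?thesis by (simp add: funpow_partial_commute)
  qed
qed simp

lemma multi_partial_split:
  "l < n \<Longrightarrow> f \<in> poly_fun \<Longrightarrow> multi_partial e n f = multi_partial (e(l := 0)) n ((partial l ^^ e l) f)"
  by (simp add: multi_partial_funpow_partial)

lemma multi_partial_comp_transpose_vanishing:
  assumes "e a = 0" "e b = 0"
  shows "multi_partial e n (\<lambda>p. f (\<lambda>i. p (Transposition.transpose a b i)))
       = (\<lambda>p. multi_partial e n f (\<lambda>i. p (Transposition.transpose a b i)))"
proof (induction n arbitrary: f)
  case (Suc n)
  have "partial (Transposition.transpose a b n) ^^ e n = partial n ^^ e n"
    using assms by (cases "n = a \<or> n = b") auto
  then show ?case
    by (simp only: multi_partial.simps funpow_partial_comp_transpose Suc.IH)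
qed simp

lemma multi_partial_comp_transpose:
  assumes "a < n" "b < n" "f \<in> poly_fun"
  shows "multi_partial e n (\<lambda>p. f (\<lambda>i. p (Transposition.transpose a b i)))
       = (\<lambda>p. multi_partial (e \<circ> Transposition.transpose a b) n f (\<lambda>i. p (Transposition.transpose a b i)))"
proof (cases "a = b")
  case False
  let ?\<tau> = "Transposition.transpose a b"
  define F where "F = (\<lambda>p. f (\<lambda>i. p (?\<tau> i)))"
  define e0 where "e0 = e(b := 0, a := 0)"
  have "F \<in> poly_fun"
    unfolding F_def using assms(3) by (rule poly_fun_reindex)
  then have "multi_partial e n F = multi_partial (e(b := 0)) n ((partial b ^^ e b) F)"
    using assms(2) by (intro multi_partial_split) auto
  also have "\<dots> = multi_partial e0 n ((partial a ^^ e a) ((partial b ^^ e b) F))"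
    using multi_partial_split[of a n "(partial b ^^ e b) F" "e(b := 0)"] \<open>F \<in> poly_fun\<close> assms(1) False
    by (simp add: e0_def)
  also have "\<dots> = multi_partial e0 n (\<lambda>p. (partial b ^^ e a) ((partial a ^^ e b) f) (\<lambda>i. p (?\<tau> i)))"
    unfolding F_def
    by (simp only: funpow_partial_comp_transpose transpose_apply_first transpose_apply_second)
  also have "\<dots> = (\<lambda>p. multi_partial e0 n ((partial b ^^ e a) ((partial a ^^ e b) f)) (\<lambda>i. p (?\<tau> i)))"
    by (rule multi_partial_comp_transpose_vanishing) (simp_all add: e0_def)
  also have "multi_partial e0 n ((partial b ^^ e a) ((partial a ^^ e b) f))
      = multi_partial (e0(b := e a, a := e b)) n f"
    using assms False by (simp add: multi_partial_funpow_partial e0_def)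
  also have "e0(b := e a, a := e b) = e \<circ> ?\<tau>"
    using False by (auto simp: e0_def Transposition.transpose_def)
  finally show ?thesis
    unfolding F_def .
qed simp

lemma Delta_empty: "Delta n {} p = (\<Prod>(i, j)\<in>{(i, j). i < j \<and> j < n}. p i - p j)"
  by (simp add: Delta_def)

lemma poly_fun_Delta [simp, intro]: "Delta n J \<in> poly_fun"
  by (cases "J = {}") (auto simp: Delta_def[abs_def] case_prod_beta)

lemma finite_ordered_pairs: "finite {(i, j). i < j \<and> j < (n::nat)}"
  by (rule finite_subset[of _ "{..<n} \<times> {..<n}"]) auto

lemma Delta_transpose_Suc:
  assumes "Suc a < n"
  shows "Delta n {} (\<lambda>i. p (Transposition.transpose a (Suc a) i)) = - Delta n {} p"
proof -
  let ?\<tau> = "Transposition.transpose a (Suc a)"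
  define P where "P = {(i, j). i < j \<and> j < n}"
  define g where "g = (\<lambda>(i, j). p i - p j)"
  have a_pair: "(a, Suc a) \<in> P" and "finite P"
    using assms finite_ordered_pairs by (auto simp: P_def)
  have "(\<Prod>x\<in>P - {(a, Suc a)}. g (map_prod ?\<tau> ?\<tau> x)) = (\<Prod>x\<in>P - {(a, Suc a)}. g x)"
    by (rule prod.reindex_bij_witness[of _ "map_prod ?\<tau> ?\<tau>" "map_prod ?\<tau> ?\<tau>"])
      (use assms in \<open>auto simp: P_def Transposition.transpose_def split: if_splits\<close>)
  moreover have "g (map_prod ?\<tau> ?\<tau> (a, Suc a)) = - g (a, Suc a)"
    by (simp add: g_def)
  ultimately have "(\<Prod>x\<in>P. g (map_prod ?\<tau> ?\<tau> x)) = - (\<Prod>x\<in>P. g x)"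
    using prod.remove[OF \<open>finite P\<close> a_pair, of g] prod.remove[OF \<open>finite P\<close> a_pair, of "g \<circ> map_prod ?\<tau> ?\<tau>"]
    by simp
  then show ?thesis
    by (simp add: Delta_empty P_def g_def case_prod_beta)
qed

lemma Delta_transpose:
  assumes "a < n" "b < n" "a \<noteq> b"
  shows "Delta n {} (\<lambda>i. p (Transposition.transpose a b i)) = - Delta n {} p"
proof -
  have "Delta n {} (\<lambda>i. p (Transposition.transpose a b i)) = - Delta n {} p"
    if "a < b" "b < n" for a b p
    using that
  proof (induction b arbitrary: p)
    case (Suc b)
    let ?\<sigma> = "Transposition.transpose b (Suc b)"
    show ?case
    proof (cases "a = b")
      case True
      with Suc.prems show ?thesis by (simp add: Delta_transpose_Suc)
    next
      case False
      with Suc.prems have "a < b" by simp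
      have "Transposition.transpose a (Suc b) i = ?\<sigma> (Transposition.transpose a b (?\<sigma> i))" for i
        using transpose_triple[of "Suc b" a b i] \<open>a < b\<close> by (simp add: transpose_commute)
      then have "Delta n {} (\<lambda>i. p (Transposition.transpose a (Suc b) i))
          = - Delta n {} (\<lambda>i. p (?\<sigma> (Transposition.transpose a b i)))"
        using Delta_transpose_Suc[of b n "\<lambda>i. p (?\<sigma> (Transposition.transpose a b i))"] Suc.prems
        by simp
      also have "\<dots> = Delta n {} (\<lambda>i. p (?\<sigma> i))"
        using Suc.IH[of "\<lambda>i. p (?\<sigma> i)"] \<open>a < b\<close> Suc.prems by simp
      also have "\<dots> = - Delta n {} p"
        using Suc.prems(2) by (rule Delta_transpose_Suc)
      finally show ?thesis .
    qed
  qed simp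
  with assms show ?thesis
    by (metis linorder_neqE_nat transpose_commute)
qed

definition delta_deriv :: "nat \<Rightarrow> (nat \<Rightarrow> nat) \<Rightarrow> real" where
  "delta_deriv n e = multi_partial e n (Delta n {}) (\<lambda>_. 0)"

lemma delta_deriv_transpose:
  assumes "a < n" "b < n" "a \<noteq> b"
  shows "delta_deriv n (e \<circ> Transposition.transpose a b) = - delta_deriv n e"
proof -
  have "delta_deriv n (e \<circ> Transposition.transpose a b)
      = multi_partial e n (\<lambda>p. Delta n {} (\<lambda>i. p (Transposition.transpose a b i))) (\<lambda>_. 0)"
    using multi_partial_comp_transpose[OF assms(1,2) poly_fun_Delta, of e]
    by (simp add: delta_deriv_def)
  also have "\<dots> = multi_partial e n (\<lambda>p. (- 1) * Delta n {} p) (\<lambda>_. 0)"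
    using Delta_transpose[OF assms] by simp
  also have "\<dots> = - delta_deriv n e"
    using multi_partial_scale[OF poly_fun_Delta, of e n "-1"] by (simp add: delta_deriv_def)
  finally show ?thesis .
qed

lemma delta_deriv_eq_0:
  assumes "u < n" "v < n" "u \<noteq> v" "e u = e v"
  shows "delta_deriv n e = 0"
proof -
  have "e \<circ> Transposition.transpose u v = e"
    using assms(4) by (auto simp: Transposition.transpose_def)
  with delta_deriv_transpose[OF assms(1-3), of e] show ?thesis
    by simp
qed

lemma Delta_Suc: "Delta (Suc n) {} p = Delta n {} p * (\<Prod>i<n. p i - p n)"
proof -
  have pairs: "{(i, j). i < j \<and> j < Suc n} = {(i, j). i < j \<and> j < n} \<union> (\<lambda>i. (i, n)) ` {..<n}"
    by auto
  have "Delta (Suc n) {} p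
      = Delta n {} p * (\<Prod>(i, j)\<in>(\<lambda>i. (i, n)) ` {..<n}. p i - p j)"
    unfolding Delta_empty pairs by (rule prod.union_disjoint) (auto simp: finite_ordered_pairs)
  also have "(\<Prod>(i, j)\<in>(\<lambda>i. (i, n)) ` {..<n}. p i - p j) = (\<Prod>i<n. p i - p n)"
    by (subst prod.reindex) (auto simp: inj_on_def)
  finally show ?thesis .
qed

lemma partial_eq_0_if_indep: "(\<And>p t. g (p(l := t)) = g p) \<Longrightarrow> partial l g = (\<lambda>p. 0)"
  by (simp add: partial_def)

lemma funpow_partial_mult_indep:
  assumes "g \<in> poly_fun" "\<And>p t. g (p(l := t)) = g p" "h \<in> poly_fun"
  shows "(partial l ^^ k) (\<lambda>p. g p * h p) = (\<lambda>p. g p * (partial l ^^ k) h p)"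
  using assms by (induction k) (simp_all add: partial_mult partial_eq_0_if_indep)

lemma funpow_partial_linear_factor:
  assumes "h \<in> poly_fun" "a \<noteq> L"
  shows "(partial L ^^ Suc j) (\<lambda>p. (p a - p L) * h p)
       = (\<lambda>p. (p a - p L) * (partial L ^^ Suc j) h p - real (Suc j) * (partial L ^^ j) h p)"
proof -
  have factor: "partial L (\<lambda>p. p a - p L) = (\<lambda>p. - 1)"
    using assms(2) by (simp add: partial_diff partial_coord)
  have product: "partial L (\<lambda>p. (p a - p L) * g p) = (\<lambda>p. (p a - p L) * partial L g p - g p)"
    if "g \<in> poly_fun" for g
    using that by (simp add: partial_mult factor)
  show ?thesis
  proof (induction j)
    case 0
    show ?case
      using assms(1) by (simp add: product)
  next
    case (Suc j)
    let ?H = "(partial L ^^ j) h"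
    have H: "?H \<in> poly_fun"
      using assms(1) by simp
    have "(partial L ^^ Suc (Suc j)) (\<lambda>p. (p a - p L) * h p)
        = partial L (\<lambda>p. (p a - p L) * partial L ?H p - real (Suc j) * ?H p)"
      using Suc.IH by simp
    also have "\<dots> = (\<lambda>p. partial L (\<lambda>p. (p a - p L) * partial L ?H p) p - partial L (\<lambda>p. real (Suc j) * ?H p) p)"
      using H by (intro partial_diff) auto
    also have "\<dots> = (\<lambda>p. (p a - p L) * partial L (partial L ?H) p - partial L ?H p - real (Suc j) * partial L ?H p)"
      using H by (simp only: product[OF poly_fun_partial] partial_scale)
    finally show ?case
      by (simp add: algebra_simps)
  qed
qed

lemma funpow_partial_prod_diff:
  assumes "finite A" "L \<notin> A"
  shows "(partial L ^^ card A) (\<lambda>p. \<Prod>i\<in>A. p i - p L) = (\<lambda>p. (-1) ^ card A * fact (card A))"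
  using assms
proof (induction A rule: finite_induct)
  case (insert a A)
  let ?Q = "\<lambda>p. \<Prod>i\<in>A. p i - p L"
  have "(partial L ^^ Suc (card A)) ?Q = (\<lambda>p. 0)"
    using insert by simp
  with insert show ?case
    by (simp add: funpow_partial_linear_factor[of ?Q a L "card A"] mult_ac del: funpow.simps)
qed simp

lemma delta_deriv_id: "delta_deriv n (\<lambda>i. i) = (\<Prod>k<n. (-1) ^ k * fact k)"
proof (induction n)
  case (Suc n)
  have "(partial n ^^ n) (Delta (Suc n) {}) = (\<lambda>p. Delta n {} p * (partial n ^^ n) (\<lambda>p. \<Prod>i<n. p i - p n) p)"
    unfolding Delta_Suc[abs_def] by (rule funpow_partial_mult_indep) (auto simp: Delta_empty intro!: prod.cong)
  also have "\<dots> = (\<lambda>p. ((-1) ^ n * fact n) * Delta n {} p)"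
    using funpow_partial_prod_diff[of "{..<n}" n] by (simp add: mult.commute)
  finally have "delta_deriv (Suc n) (\<lambda>i. i) = multi_partial (\<lambda>i. i) n (\<lambda>p. ((-1) ^ n * fact n) * Delta n {} p) (\<lambda>_. 0)"
    by (simp add: delta_deriv_def)
  also have "\<dots> = ((-1) ^ n * fact n) * delta_deriv n (\<lambda>i. i)"
    by (simp add: multi_partial_scale delta_deriv_def)
  finally show ?case
    using Suc by simp
qed (simp add: delta_deriv_def Delta_empty)

lemma poly_fun_omega [simp, intro]: "omega n ms J \<in> poly_fun"
  by (induction ms arbitrary: J) (auto simp: dj_def)

lemma omega_eq_0_if_card_ne:
  "finite J \<Longrightarrow> card J \<noteq> length ms \<Longrightarrow> omega n ms J = (\<lambda>p. 0)"
proof (induction ms arbitrary: J)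
  case Nil
  then show ?case by (auto simp: Delta_def)
next
  case (Cons m ms)
  have "omega n ms (J - {l}) = (\<lambda>p. 0)" if "l \<in> J" for l
    using Cons.prems card_Suc_Diff1[OF Cons.prems(1) that] by (intro Cons.IH) auto
  then show ?case by (simp add: dj_def)
qed

definition omega_deriv :: "nat \<Rightarrow> nat list \<Rightarrow> nat set \<Rightarrow> (nat \<Rightarrow> nat) \<Rightarrow> real" where
  "omega_deriv n ms J e = multi_partial e n (omega n ms J) (\<lambda>_. 0)"

lemma omega_deriv_Nil: "omega_deriv n [] J e = (if J = {} then delta_deriv n e else 0)"
  by (simp add: omega_deriv_def delta_deriv_def Delta_def)

lemma omega_deriv_Cons:
  "omega_deriv n (m # ms) J e
   = (if J \<subseteq> {..<n}
      then \<Sum>l\<in>J. wedge_sign l (J - {l}) * omega_deriv n ms (J - {l}) (e(l := e l + m))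
      else 0)"
proof (cases "J \<subseteq> {..<n}")
  case True
  then have "omega_deriv n (m # ms) J e
      = (\<Sum>l\<in>J. wedge_sign l (J - {l}) * multi_partial e n ((partial l ^^ m) (omega n ms (J - {l}))) (\<lambda>_. 0))"
    by (simp add: omega_deriv_def dj_def multi_partial_linear)
  also have "\<dots> = (\<Sum>l\<in>J. wedge_sign l (J - {l}) * omega_deriv n ms (J - {l}) (e(l := e l + m)))"
    using True by (intro sum.cong) (auto simp: omega_deriv_def multi_partial_funpow_partial)
  finally show ?thesis
    using True by simp
qed (simp add: omega_deriv_def dj_def)

lemma omega_deriv_eq_0_if_equal_exponents:
  assumes "u < n" "v < n" "u \<noteq> v" "u \<notin> J" "v \<notin> J" "e u = e v"
  shows "omega_deriv n ms J e = 0"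
  using assms(4-6)
proof (induction ms arbitrary: J e)
  case Nil
  then show ?case
    using delta_deriv_eq_0[OF assms(1-3)] by (simp add: omega_deriv_Nil)
next
  case (Cons m ms)
  have "omega_deriv n ms (J - {l}) (e(l := e l + m)) = 0" if "l \<in> J" for l
    using Cons.prems that by (intro Cons.IH) auto
  then show ?case
    by (simp add: omega_deriv_Cons)
qed

text \<open>When \<open>d\<^sub>v\<close> acts, it raises a zero exponent in \<open>J\<close> to \<open>v = e u\<close>.\<close>

lemma omega_deriv_eq_0_if_exponent_in_list:
  assumes "v \<in> set ms" "u < n" "u \<notin> J" "e u = v" "\<forall>j\<in>J. e j = 0"
  shows "omega_deriv n ms J e = 0"
  using assms
proof (induction ms arbitrary: J e)
  case (Cons m ms)
  have "omega_deriv n ms (J - {l}) (e(l := e l + m)) = 0" if "l \<in> J" "J \<subseteq> {..<n}" for l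
  proof (cases "v = m")
    case True
    with Cons.prems that show ?thesis
      by (intro omega_deriv_eq_0_if_equal_exponents[of u n l]) auto
  next
    case False
    with Cons.prems that show ?thesis
      by (intro Cons.IH) auto
  qed
  then show ?case
    by (simp add: omega_deriv_Cons)
qed simp

text \<open>\<open>assign_desc e ms J\<close> puts \<open>ms ! 0, ms ! 1, \<dots>\<close> on the elements of \<open>J\<close> in decreasing
  order and agrees with \<open>e\<close> off \<open>J\<close>.\<close>

definition assign_desc :: "(nat \<Rightarrow> nat) \<Rightarrow> nat list \<Rightarrow> nat set \<Rightarrow> nat \<Rightarrow> nat" where
  "assign_desc e ms J j = (if j \<in> J then ms ! card {i \<in> J. j < i} else e j)"

lemma assign_desc_remove_max:
  assumes "finite J" "l \<in> J" "\<forall>i\<in>J. \<not> l < i"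
  shows "assign_desc (e(l := m)) ms (J - {l}) = assign_desc e (m # ms) J"
proof
  fix j
  show "assign_desc (e(l := m)) ms (J - {l}) j = assign_desc e (m # ms) J j"
  proof (cases "j \<in> J - {l}")
    case True
    then have "j \<in> J" "j \<noteq> l"
      by auto
    with assms(3) have "j < l"
      using linorder_neqE_nat by blast
    have "{i \<in> J - {l}. j < i} = {i \<in> J. j < i} - {l}"
      by auto
    then have "card {i \<in> J. j < i} = Suc (card {i \<in> J - {l}. j < i})"
      using assms \<open>j < l\<close> by (simp only:) (rule card_Suc_Diff1[symmetric]; auto)
    with True show ?thesis
      by (simp add: assign_desc_def)
  next
    case False
    show ?thesis
    proof (cases "j = l")
      case True
      from assms(3) have "card {i \<in> J. l < i} = 0"
        by (simp add: card_eq_0_iff)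
      with True assms(2) show ?thesis
        by (simp add: assign_desc_def)
    next
      case False
      with \<open>j \<notin> J - {l}\<close> have "j \<notin> J"
        by blast
      with False show ?thesis
        by (simp add: assign_desc_def)
    qed
  qed
qed

lemma assign_desc_remove_transpose:
  assumes "finite J" "l \<in> J" "l' \<in> J" "l < l'" and next_elem: "\<forall>i\<in>J. l < i \<longrightarrow> l' \<le> i"
  shows "assign_desc (e(l := m)) ms (J - {l})
       = assign_desc (e(l' := m)) ms (J - {l'}) \<circ> Transposition.transpose l l'"
proof
  fix j
  let ?above = "\<lambda>l. {i \<in> J - {l}. j < i}"
  consider "j = l" | "j = l'" | "j \<notin> J" | "j \<in> J" "l' < j" | "j \<in> J" "j < l"
    using next_elem assms(4) by (metis le_neq_implies_less linorder_neqE_nat)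
  then show "assign_desc (e(l := m)) ms (J - {l}) j
      = (assign_desc (e(l' := m)) ms (J - {l'}) \<circ> Transposition.transpose l l') j"
  proof cases
    case 1
    with assms(4) show ?thesis
      by (simp add: assign_desc_def)
  next
    case 2
    have "{i \<in> J - {l}. l' < i} = {i \<in> J - {l'}. l < i}"
      using next_elem assms(4) by (auto simp: le_less)
    with 2 assms(2-4) show ?thesis
      by (simp add: assign_desc_def)
  next
    case 3
    with assms(2,3) have "j \<noteq> l" "j \<noteq> l'"
      by auto
    with 3 show ?thesis
      by (simp add: assign_desc_def)
  next
    case 4
    then have "?above l = ?above l'"
      using assms(4) by auto
    with 4 assms(4) show ?thesis
      by (simp add: assign_desc_def)
  next
    case 5
    have "?above l = {i \<in> J. j < i} - {l}" "?above l' = {i \<in> J. j < i} - {l'}"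
      by auto
    moreover have "l \<in> {i \<in> J. j < i}" "l' \<in> {i \<in> J. j < i}"
      using 5 assms(2-4) by auto
    ultimately have "card (?above l) = card (?above l')"
      using assms(1) by (simp add: card_Diff_singleton)
    with 5 assms(4) show ?thesis
      by (simp add: assign_desc_def)
  qed
qed

lemma delta_deriv_assign_desc_remove:
  assumes "J \<subseteq> {..<n}" "l \<in> J"
  shows "delta_deriv n (assign_desc (e(l := m)) ms (J - {l}))
       = (-1) ^ card {i \<in> J. l < i} * delta_deriv n (assign_desc e (m # ms) J)"
  using assms(2)
proof (induction "card {i \<in> J. l < i}" arbitrary: l rule: less_induct)
  case less
  have "finite J"
    using finite_subset[OF assms(1) finite_lessThan] .
  show ?case
  proof (cases "\<exists>i\<in>J. l < i")
    case False
    then have "card {i \<in> J. l < i} = 0"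
      by (simp add: card_eq_0_iff)
    with False show ?thesis
      using assign_desc_remove_max[OF \<open>finite J\<close> less.prems] by simp
  next
    case True
    let ?above = "\<lambda>l. {i \<in> J. l < i}"
    define l' where "l' = Min (?above l)"
    have "finite (?above l)" "?above l \<noteq> {}"
      using \<open>finite J\<close> True by auto
    then have "l' \<in> J" "l < l'" and next_elem: "\<forall>i\<in>J. l < i \<longrightarrow> l' \<le> i"
      using Min_in Min_le unfolding l'_def by auto
    have "?above l = insert l' (?above l')"
      using \<open>l' \<in> J\<close> \<open>l < l'\<close> next_elem by force
    then have card_above: "card (?above l) = Suc (card (?above l'))"
      using \<open>finite J\<close> by simp
    have "l < n" "l' < n"
      using assms(1) less.prems \<open>l' \<in> J\<close> by auto
    have "delta_deriv n (assign_desc (e(l := m)) ms (J - {l}))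
        = delta_deriv n (assign_desc (e(l' := m)) ms (J - {l'}) \<circ> Transposition.transpose l l')"
      using assign_desc_remove_transpose[OF \<open>finite J\<close> less.prems \<open>l' \<in> J\<close> \<open>l < l'\<close> next_elem]
      by simp
    also have "\<dots> = - delta_deriv n (assign_desc (e(l' := m)) ms (J - {l'}))"
      using \<open>l < n\<close> \<open>l' < n\<close> \<open>l < l'\<close> by (intro delta_deriv_transpose) auto
    also have "\<dots> = - ((-1) ^ card (?above l') * delta_deriv n (assign_desc e (m # ms) J))"
      using card_above \<open>l' \<in> J\<close> by (subst less.hyps) auto
    finally show ?thesis
      unfolding card_above by simp
  qed
qed

lemma wedge_sign_mult_sign_above:
  assumes "finite J" "l \<in> J"
  shows "wedge_sign l (J - {l}) * (-1) ^ card {i \<in> J. l < i} = (-1) ^ (card J - 1)"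
proof -
  have "card (J - {l}) = card ({i \<in> J - {l}. i < l} \<union> {i \<in> J. l < i})"
    by (rule arg_cong[where f = card]) auto
  also have "\<dots> = card {i \<in> J - {l}. i < l} + card {i \<in> J. l < i}"
    using assms(1) by (intro card_Un_disjoint) auto
  finally show ?thesis
    using assms by (simp add: wedge_sign_def power_add)
qed

lemma omega_deriv_eq:
  assumes "J \<subseteq> {..<n}" "card J = length ms" "\<forall>j\<in>J. e j = 0"
  shows "omega_deriv n ms J e
       = (-1) ^ (length ms choose 2) * fact (length ms) * delta_deriv n (assign_desc e ms J)"
  using assms
proof (induction ms arbitrary: J e)
  case Nil
  then have "J = {}"
    using finite_subset[OF Nil.prems(1) finite_lessThan] by simp
  moreover have "assign_desc e [] {} = e"
    by (simp add: assign_desc_def[abs_def])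
  ultimately show ?case
    by (simp add: omega_deriv_Nil binomial_eq_0)
next
  case (Cons m ms)
  let ?k = "length ms"
  have "finite J"
    using finite_subset[OF Cons.prems(1) finite_lessThan] .
  have "wedge_sign l (J - {l}) * omega_deriv n ms (J - {l}) (e(l := e l + m))
      = (-1) ^ ?k * ((-1) ^ (?k choose 2) * fact ?k) * delta_deriv n (assign_desc e (m # ms) J)"
    if "l \<in> J" for l
  proof -
    have "omega_deriv n ms (J - {l}) (e(l := m))
        = (-1) ^ (?k choose 2) * fact ?k * delta_deriv n (assign_desc (e(l := m)) ms (J - {l}))"
      using Cons.prems that \<open>finite J\<close> by (intro Cons.IH) auto
    moreover have "e l = 0"
      using Cons.prems(3) that by simp
    ultimately show ?thesis
      using delta_deriv_assign_desc_remove[OF Cons.prems(1) that, of e m ms]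
        wedge_sign_mult_sign_above[OF \<open>finite J\<close> that] Cons.prems(2)
      by (simp add: algebra_simps)
  qed
  moreover have "Suc ?k choose 2 = ?k + (?k choose 2)"
    using binomial_Suc_Suc[of ?k 1] by (simp add: numeral_2_eq_2)
  ultimately show ?case
    using Cons.prems(1,2) by (simp add: omega_deriv_Cons power_add algebra_simps)
qed

lemma sorted_wrt_greater_distinct: "sorted_wrt (>) (xs :: 'a :: order list) \<Longrightarrow> distinct xs"
  by (induction xs) auto

lemma card_greater_nth:
  fixes xs :: "'a :: linorder list"
  assumes "sorted_wrt (>) xs" "r < length xs"
  shows "card {x \<in> set xs. xs ! r < x} = r"
proof -
  let ?pre = "take r xs" and ?post = "drop (Suc r) xs"
  have split: "xs = ?pre @ xs ! r # ?post"
    using assms(2) by (rule id_take_nth_drop)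
  then have "sorted_wrt (>) (?pre @ xs ! r # ?post)" and set_xs: "set xs = set (?pre @ xs ! r # ?post)"
    using assms(1) by simp_all
  then have "\<forall>x\<in>set ?pre. xs ! r < x" "\<forall>x\<in>set ?post. x < xs ! r"
    by (simp_all add: sorted_wrt_append)
  then have "{x \<in> set xs. xs ! r < x} = set ?pre"
    unfolding set_xs by auto
  moreover have "distinct ?pre"
    using sorted_wrt_greater_distinct[OF assms(1)] by simp
  ultimately show ?thesis
    using assms(2) by (simp add: distinct_card)
qed

lemma assign_desc_sorted:
  assumes "sorted_wrt (>) ms" "j \<in> set ms"
  shows "assign_desc e ms (set ms) j = j"
proof -
  obtain r where "r < length ms" "j = ms ! r"
    using assms(2) by (auto simp: in_set_conv_nth)
  with assms show ?thesis
    by (simp add: assign_desc_def card_greater_nth)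
qed

lemma finite_index_seqs: "finite (index_seqs n)"
proof (rule finite_subset)
  show "index_seqs n \<subseteq> {xs. set xs \<subseteq> {1..n-1} \<and> distinct xs}"
    by (auto simp: index_seqs_def sorted_wrt_greater_distinct)
qed (simp add: finite_subset_distinct)

lemma set_index_seqs: "m \<in> index_seqs n \<Longrightarrow> set m \<subseteq> {..<n}"
  by (auto simp: index_seqs_def subset_iff)

lemma index_seqs_eq_if_set_eq:
  assumes "s \<in> index_seqs n" "m \<in> index_seqs n" "set s = set m"
  shows "s = m"
proof -
  have "sorted_wrt (<) (rev s)" "sorted_wrt (<) (rev m)"
    using assms(1,2) by (simp_all add: index_seqs_def sorted_wrt_rev)
  then have "rev s = rev m"
    using assms(3) by (intro strict_sorted_equal) simp_all
  then show ?thesis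
    by simp
qed

lemma omega_deriv_index_seqs_other:
  assumes "m \<in> index_seqs n" "s \<in> index_seqs n" "s \<noteq> m"
  shows "omega_deriv n s (set m) (\<lambda>l. if l \<in> set m then 0 else l) = 0"
proof (cases "length s = length m")
  case False
  then have "card (set m) \<noteq> length s"
    using assms(1) by (simp add: index_seqs_def sorted_wrt_greater_distinct distinct_card)
  then show ?thesis
    by (simp add: omega_deriv_def omega_eq_0_if_card_ne)
next
  case True
  obtain v where v: "v \<in> set s" "v \<notin> set m"
  proof (rule ccontr)
    assume "\<not> thesis"
    then have "set s \<subseteq> set m"
      using that by blast
    moreover have "card (set s) = card (set m)"
      using assms(1,2) True by (simp add: index_seqs_def sorted_wrt_greater_distinct distinct_card)
    ultimately have "set s = set m"
      by (intro card_subset_eq) auto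
    with assms index_seqs_eq_if_set_eq show False
      by blast
  qed
  moreover have "v < n"
    using v(1) set_index_seqs[OF assms(2)] by auto
  ultimately show ?thesis
    by (intro omega_deriv_eq_0_if_exponent_in_list[of v s v]) auto
qed

lemma omega_deriv_index_seqs_self:
  assumes "m \<in> index_seqs n"
  shows "omega_deriv n m (set m) (\<lambda>l. if l \<in> set m then 0 else l) \<noteq> 0"
proof -
  have sorted: "sorted_wrt (>) m" and "set m \<subseteq> {..<n}"
    using assms set_index_seqs by (auto simp: index_seqs_def)
  moreover have "card (set m) = length m"
    using sorted by (simp add: sorted_wrt_greater_distinct distinct_card)
  moreover have "assign_desc (\<lambda>l. if l \<in> set m then 0 else l) m (set m) = (\<lambda>i. i)"
    using assign_desc_sorted[OF sorted] by (auto simp: assign_desc_def)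
  ultimately show ?thesis
    by (simp add: omega_deriv_eq delta_deriv_id)
qed

theorem lemma12:
  fixes n :: nat
  shows "finite (index_seqs n) \<and> lin_indep_family (index_seqs n) (omega n)"
proof
  show "finite (index_seqs n)"
    by (rule finite_index_seqs)
  show "lin_indep_family (index_seqs n) (omega n)"
    unfolding lin_indep_family_def
  proof (intro allI impI ballI)
    fix c m
    assume vanishes: "\<forall>J p. (\<Sum>s\<in>index_seqs n. c s * omega n s J p) = 0" and m: "m \<in> index_seqs n"
    define e where "e = (\<lambda>l. if l \<in> set m then 0 else l)"
    have "0 = multi_partial e n (\<lambda>p. \<Sum>s\<in>index_seqs n. c s * omega n s (set m) p) (\<lambda>_. 0)"
      using vanishes by simp
    also have "\<dots> = (\<Sum>s\<in>index_seqs n. c s * omega_deriv n s (set m) e)"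
      by (simp add: multi_partial_linear omega_deriv_def)
    also have "\<dots> = c m * omega_deriv n m (set m) e"
      using m omega_deriv_index_seqs_other[OF m] finite_index_seqs
      by (subst sum.remove[of _ m]) (auto simp: e_def intro!: sum.neutral)
    finally show "c m = 0"
      using omega_deriv_index_seqs_self[OF m] by (simp add: e_def)
  qed
qed

end
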